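(* Let $d\geq 3$, $k\geq 1$ and $2\leq l\leq d$. For every directed plateau polyhypercube $P$ of dimension $d$ and width $k$, the projection of $P$ onto the coordinate plane $(\vec{i_1},\vec{i_l})$ is a directed column-convex polyomino of width $k$.
   Context: Work in $\mathbb{Z}^d$ with orthonormal coordinate system $(0,\vec{i_1},\dots,\vec{i_d})$; a cell is a unit hypercube of the lattice. A polyhypercube of dimension $d$ is a finite union of cells, connected through their $(d-1)$-dimensional faces, defined up to translation. Its width is the number of distinct values of the $\vec{i_1}$-coordinate taken by its cells (so a polyhypercube of width one is called a stratum; the strata of a polyhypercube are its intersections with the layers of constant $\vec{i_1}$-coordinate). A plateau is a stratum that is a hyperrectangle (a box). An elementary step is a positive move of one unit along one axis $\vec{i_j}$, $1\leq j\leq d$. A polyhypercube is directed if there is a distinguished cell (the root) from which every cell can be reached by a path of cells of the polyhypercube using only elementary steps. A directed plateau polyhypercube is a directed polyhypercube all of whose strata are plateaus. The projection onto the plane $(\vec{i_1},\vec{i_l})$ is the set of unit squares $(x_1,x_l)$ such that some cell of the polyhypercube has these $\vec{i_1}$ and $\vec{i_l}$ coordinates; it is a polyomino whose columns correspond to the values of the $\vec{i_1}$-coordinate. A polyomino (finite edge-connected union of unit squares up to translation) is column-convex if its intersection with every column is connected, and directed if every cell can be reached from a root cell by a path of cells using only unit North or East steps; its width is its number of columns and its area its number of cells. *)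

theory Defs
  imports Main
begin

text \<open>A cell of Z^d is identified with its minimal corner, a function nat => int whose
 coordinates 1..d are meaningful (coordinate 1 is the i_1 axis) and which is 0 elsewhere.\<close>

definition cell_space :: "nat \<Rightarrow> (nat \<Rightarrow> int) set" where
  "cell_space d = {x. \<forall>j. (j < 1 \<or> j > d) \<longrightarrow> x j = 0}"

definition face_adjacent :: "nat \<Rightarrow> (nat \<Rightarrow> int) \<Rightarrow> (nat \<Rightarrow> int) \<Rightarrow> bool" where
  "face_adjacent d x y \<longleftrightarrow> (\<exists>j\<in>{1..d}. (y = x(j := x j + 1) \<or> x = y(j := y j + 1)))"

definition polyhypercube :: "nat \<Rightarrow> (nat \<Rightarrow> int) set \<Rightarrow> bool" where
  "polyhypercube d P \<longleftrightarrow> finite P \<and> P \<noteq> {} \<and> P \<subseteq> cell_space d \<and>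
     (\<forall>x\<in>P. \<forall>y\<in>P. (x, y) \<in> {(a, b). a \<in> P \<and> b \<in> P \<and> face_adjacent d a b}\<^sup>*)"

definition elem_step :: "nat \<Rightarrow> (nat \<Rightarrow> int) \<Rightarrow> (nat \<Rightarrow> int) \<Rightarrow> bool" where
  "elem_step d x y \<longleftrightarrow> (\<exists>j\<in>{1..d}. y = x(j := x j + 1))"

definition directed_ph :: "nat \<Rightarrow> (nat \<Rightarrow> int) set \<Rightarrow> bool" where
  "directed_ph d P \<longleftrightarrow> (\<exists>r\<in>P. \<forall>c\<in>P. (r, c) \<in> {(a, b). a \<in> P \<and> b \<in> P \<and> elem_step d a b}\<^sup>*)"

definition ph_width :: "(nat \<Rightarrow> int) set \<Rightarrow> nat" where
  "ph_width P = card ((\<lambda>x. x 1) ` P)"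

definition stratum :: "(nat \<Rightarrow> int) set \<Rightarrow> int \<Rightarrow> (nat \<Rightarrow> int) set" where
  "stratum P a = {x \<in> P. x 1 = a}"

definition is_box :: "nat \<Rightarrow> (nat \<Rightarrow> int) set \<Rightarrow> bool" where
  "is_box d S \<longleftrightarrow> (\<exists>lo hi. S = {x \<in> cell_space d. \<forall>j\<in>{1..d}. lo j \<le> x j \<and> x j \<le> hi j})"

definition directed_plateau_ph :: "nat \<Rightarrow> (nat \<Rightarrow> int) set \<Rightarrow> bool" where
  "directed_plateau_ph d P \<longleftrightarrow> polyhypercube d P \<and> directed_ph d P \<and>
     (\<forall>a \<in> (\<lambda>x. x 1) ` P. is_box d (stratum P a))"

definition projection :: "(nat \<Rightarrow> int) set \<Rightarrow> nat \<Rightarrow> (int \<times> int) set" where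
  "projection P l = (\<lambda>x. (x 1, x l)) ` P"

text \<open>Polyominoes: squares (column, row) in Z^2.\<close>
definition sq_adjacent :: "int \<times> int \<Rightarrow> int \<times> int \<Rightarrow> bool" where
  "sq_adjacent p q \<longleftrightarrow> \<bar>fst p - fst q\<bar> + \<bar>snd p - snd q\<bar> = 1"

definition polyomino :: "(int \<times> int) set \<Rightarrow> bool" where
  "polyomino Q \<longleftrightarrow> finite Q \<and> Q \<noteq> {} \<and>
     (\<forall>p\<in>Q. \<forall>q\<in>Q. (p, q) \<in> {(a, b). a \<in> Q \<and> b \<in> Q \<and> sq_adjacent a b}\<^sup>*)"

definition column_convex :: "(int \<times> int) set \<Rightarrow> bool" where
  "column_convex Q \<longleftrightarrow> (\<forall>a b1 b2 b. (a, b1) \<in> Q \<and> (a, b2) \<in> Q \<and> b1 \<le> b \<and> b \<le> b2 \<longrightarrow> (a, b) \<in> Q)"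

definition ne_step :: "int \<times> int \<Rightarrow> int \<times> int \<Rightarrow> bool" where
  "ne_step p q \<longleftrightarrow> q = (fst p + 1, snd p) \<or> q = (fst p, snd p + 1)"

definition directed_polyomino :: "(int \<times> int) set \<Rightarrow> bool" where
  "directed_polyomino Q \<longleftrightarrow> (\<exists>r\<in>Q. \<forall>c\<in>Q. (r, c) \<in> {(a, b). a \<in> Q \<and> b \<in> Q \<and> ne_step a b}\<^sup>*)"

definition polyomino_width :: "(int \<times> int) set \<Rightarrow> nat" where
  "polyomino_width Q = card (fst ` Q)"

end

theory Submission
  imports Defs
begin

text \<open>Projecting onto the plane \<open>(i\<^sub>1, i\<^sub>l)\<close> turns every unit step of a cell into either no
  move or a unit move of its image, so connectivity and directedness survive the projection.
  Column convexity comes from the plateaus: the cells of a stratum with given \<open>i\<^sub>1\<close>-coordinate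
  form a box, whose \<open>i\<^sub>l\<close>-coordinates fill an interval.\<close>

lemma rtrancl_restrict_image:
  assumes "(x, y) \<in> {(a, b). a \<in> P \<and> b \<in> P \<and> R a b}\<^sup>*"
    and "\<And>a b. a \<in> P \<Longrightarrow> b \<in> P \<Longrightarrow> R a b \<Longrightarrow> f a = f b \<or> S (f a) (f b)"
  shows "(f x, f y) \<in> {(a, b). a \<in> f ` P \<and> b \<in> f ` P \<and> S a b}\<^sup>*"
  using assms(1)
proof (induction rule: rtrancl_induct)
  case base
  then show ?case by simp
next
  case (step y z)
  then have yz: "y \<in> P" "z \<in> P" "R y z" by auto
  from assms(2)[OF yz] show ?case
  proof
    assume "f y = f z"
    then show ?thesis using step.IH by simp
  next
    assume "S (f y) (f z)"
    with yz have "(f y, f z) \<in> {(a, b). a \<in> f ` P \<and> b \<in> f ` P \<and> S a b}" by auto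
    with step.IH show ?thesis by (rule rtrancl_into_rtrancl)
  qed
qed

lemma ne_step_imp_sq_adjacent: "ne_step p q \<Longrightarrow> sq_adjacent p q"
  unfolding ne_step_def sq_adjacent_def by auto

lemma sq_adjacent_sym: "sq_adjacent p q \<Longrightarrow> sq_adjacent q p"
  unfolding sq_adjacent_def by (simp add: abs_minus_commute)

lemma projection_of_unit_step:
  fixes x :: "nat \<Rightarrow> int" and j :: nat
  assumes "l \<noteq> 1"
  defines "y \<equiv> x(j := x j + 1)"
  shows "(x 1, x l) = (y 1, y l) \<or> ne_step (x 1, x l) (y 1, y l)"
  using assms by (cases "j = 1"; cases "j = l") (simp_all add: ne_step_def)

lemma polyomino_projection:
  assumes "polyhypercube d P" and "l \<noteq> 1"
  shows "polyomino (projection P l)"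
  unfolding polyomino_def projection_def
proof (intro conjI ballI)
  show "finite ((\<lambda>x. (x 1, x l)) ` P)" and "(\<lambda>x. (x 1, x l)) ` P \<noteq> {}"
    using assms(1) unfolding polyhypercube_def by simp_all
  fix p q assume "p \<in> (\<lambda>x. (x 1, x l)) ` P" "q \<in> (\<lambda>x. (x 1, x l)) ` P"
  then obtain x y where xy: "x \<in> P" "y \<in> P" "p = (x 1, x l)" "q = (y 1, y l)" by auto
  have "(x, y) \<in> {(a, b). a \<in> P \<and> b \<in> P \<and> face_adjacent d a b}\<^sup>*"
    using assms(1) xy unfolding polyhypercube_def by auto
  then show "(p, q) \<in> {(a, b). a \<in> (\<lambda>x. (x 1, x l)) ` P \<and> b \<in> (\<lambda>x. (x 1, x l)) ` P
      \<and> sq_adjacent a b}\<^sup>*"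
    unfolding xy(3,4)
  proof (rule rtrancl_restrict_image)
    fix a b assume "face_adjacent d a b"
    then obtain j where "b = a(j := a j + 1) \<or> a = b(j := b j + 1)"
      unfolding face_adjacent_def by auto
    then show "(a 1, a l) = (b 1, b l) \<or> sq_adjacent (a 1, a l) (b 1, b l)"
    proof
      assume b: "b = a(j := a j + 1)"
      from projection_of_unit_step[OF assms(2), of a j]
      show ?thesis unfolding b[symmetric] using ne_step_imp_sq_adjacent by blast
    next
      assume a: "a = b(j := b j + 1)"
      from projection_of_unit_step[OF assms(2), of b j]
      show ?thesis unfolding a[symmetric] using ne_step_imp_sq_adjacent sq_adjacent_sym by metis
    qed
  qed
qed

lemma directed_polyomino_projection:
  assumes "directed_ph d P" and "l \<noteq> 1"
  shows "directed_polyomino (projection P l)"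
proof -
  obtain r where r: "r \<in> P"
    and reach: "\<And>c. c \<in> P \<Longrightarrow> (r, c) \<in> {(a, b). a \<in> P \<and> b \<in> P \<and> elem_step d a b}\<^sup>*"
    using assms(1) unfolding directed_ph_def by blast
  have "((r 1, r l), (c 1, c l)) \<in> {(a, b). a \<in> (\<lambda>x. (x 1, x l)) ` P
      \<and> b \<in> (\<lambda>x. (x 1, x l)) ` P \<and> ne_step a b}\<^sup>*" if "c \<in> P" for c
    using reach[OF that]
  proof (rule rtrancl_restrict_image)
    fix a b assume "elem_step d a b"
    then obtain j where "b = a(j := a j + 1)"
      unfolding elem_step_def by auto
    then show "(a 1, a l) = (b 1, b l) \<or> ne_step (a 1, a l) (b 1, b l)"
      using projection_of_unit_step[OF assms(2), of a j] by simp
  qed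
  with r show ?thesis
    unfolding directed_polyomino_def projection_def by blast
qed

lemma box_update_between:
  assumes "is_box d S" and "x \<in> S" and "y \<in> S" and "l \<in> {1..d}"
    and "x l \<le> t" and "t \<le> y l"
  shows "x(l := t) \<in> S"
proof -
  obtain lo hi where S: "S = {z \<in> cell_space d. \<forall>j\<in>{1..d}. lo j \<le> z j \<and> z j \<le> hi j}"
    using assms(1) unfolding is_box_def by blast
  have x: "x \<in> cell_space d" "\<forall>j\<in>{1..d}. lo j \<le> x j \<and> x j \<le> hi j"
    using assms(2) S by auto
  have "y l \<le> hi l"
    using assms(3,4) S by auto
  with x(2) assms(4-6) have "lo l \<le> t" "t \<le> hi l"
    by fastforce+
  with x assms(4) show ?thesis
    unfolding S cell_space_def by auto
qed

lemma column_convex_projection: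
  assumes "\<forall>a \<in> (\<lambda>x. x 1) ` P. is_box d (stratum P a)" and "l \<in> {2..d}"
  shows "column_convex (projection P l)"
  unfolding column_convex_def projection_def
proof (intro allI impI)
  fix a b1 b2 b
  assume "(a, b1) \<in> (\<lambda>x. (x 1, x l)) ` P \<and> (a, b2) \<in> (\<lambda>x. (x 1, x l)) ` P \<and> b1 \<le> b \<and> b \<le> b2"
  then obtain x y where xy: "x \<in> P" "y \<in> P" "x 1 = a" "y 1 = a" "x l = b1" "y l = b2"
    and b: "b1 \<le> b" "b \<le> b2"
    by auto
  have "is_box d (stratum P a)"
    using assms(1) xy(1,3) by blast
  moreover have "x \<in> stratum P a" "y \<in> stratum P a"
    using xy unfolding stratum_def by auto
  ultimately have "x(l := b) \<in> stratum P a"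
    using box_update_between assms(2) xy(5,6) b by auto
  moreover have "l \<noteq> 1"
    using assms(2) by simp
  ultimately show "(a, b) \<in> (\<lambda>x. (x 1, x l)) ` P"
    unfolding stratum_def using xy(3) by (auto intro: rev_image_eqI)
qed

lemma polyomino_width_projection: "polyomino_width (projection P l) = ph_width P"
  unfolding polyomino_width_def ph_width_def projection_def by (simp add: image_image)

theorem theorem1:
  fixes d k l :: nat and P :: "(nat \<Rightarrow> int) set"
  assumes "d \<ge> 3" and "k \<ge> 1" and "2 \<le> l" and "l \<le> d"
    and "directed_plateau_ph d P" and "ph_width P = k"
  shows "polyomino (projection P l) \<and> column_convex (projection P l)
         \<and> directed_polyomino (projection P l) \<and> polyomino_width (projection P l) = k"
proof -
  have l: "l \<in> {2..d}" "l \<noteq> 1"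
    using assms(3,4) by auto
  have P: "polyhypercube d P" "directed_ph d P" "\<forall>a \<in> (\<lambda>x. x 1) ` P. is_box d (stratum P a)"
    using assms(5) unfolding directed_plateau_ph_def by auto
  show ?thesis
  proof (intro conjI)
    show "polyomino (projection P l)"
      using polyomino_projection[OF P(1) l(2)] .
    show "column_convex (projection P l)"
      using column_convex_projection[OF P(3) l(1)] .
    show "directed_polyomino (projection P l)"
      using directed_polyomino_projection[OF P(2) l(2)] .
    show "polyomino_width (projection P l) = k"
      using polyomino_width_projection assms(6) by simp
  qed
qed

end
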